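(* Let $(U_L^j)_{j\geq1}$ be finite-energy solutions of the linear wave equation on $\mathbb{R}^N$ and $\{\lambda_{j,n},x_{j,n},t_{j,n}\}_n$, $j\geq1$, orthogonal sequences of parameters, with $\sum_{j\geq1}\|U_L^j\|_{S(\mathbb{R})}^{\frac{2(N+1)}{N-2}}<\infty$. Let $\{(u_{0,n},u_{1,n})\}_n$ be bounded in $\dot H^1\times L^2$, $u_{L,n}(t)=S_L(t)(u_{0,n},u_{1,n})$, and assume there is a sequence of integers $J_k\to\infty$ with $$\lim_{k\to\infty}\limsup_{n\to\infty}\Big\|u_{L,n}-\sum_{j=1}^{J_k}U^j_{L,n}\Big\|_{S(\mathbb{R})}=0.$$ Then $\lim_{J\to\infty}\limsup_{n\to\infty}\|u_{L,n}-\sum_{j=1}^JU^j_{L,n}\|_{S(\mathbb{R})}=0$, i.e. $(U_L^j,\{\lambda_{j,n},x_{j,n},t_{j,n}\}_n)_j$ is a profile decomposition of $\{(u_{0,n},u_{1,n})\}_n$.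
   Context: $N\in\{3,4,5\}$, $S(I)=L^{\frac{2(N+1)}{N-2}}(I\times\mathbb{R}^N)$, $S_L(t)$ the linear wave propagator. Orthogonality: for $j\neq k$, $\lim_n|\log\frac{\lambda_{j,n}}{\lambda_{k,n}}|+\frac{|t_{j,n}-t_{k,n}|}{\lambda_{j,n}}+\frac{|x_{j,n}-x_{k,n}|}{\lambda_{j,n}}=\infty$. $U^j_{L,n}(t,x)=\lambda_{j,n}^{-\frac N2+1}U_L^j(\frac{t-t_{j,n}}{\lambda_{j,n}},\frac{x-x_{j,n}}{\lambda_{j,n}})$. *)

theory Defs
  imports "HOL-Analysis.Analysis"
begin

definition C1c :: "('a::euclidean_space \<Rightarrow> real) \<Rightarrow> ('a \<Rightarrow> 'a \<Rightarrow> real) \<Rightarrow> bool" where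
  "C1c \<phi> \<phi>' \<longleftrightarrow> (\<forall>x. (\<phi> has_derivative \<phi>' x) (at x)) \<and>
     (\<forall>v. continuous_on UNIV (\<lambda>x. \<phi>' x v)) \<and> compact (closure {x. \<phi> x \<noteq> 0})"

definition weak_grad :: "(real^'n \<Rightarrow> real) \<Rightarrow> (real^'n \<Rightarrow> real^'n) \<Rightarrow> bool" where
  "weak_grad f g \<longleftrightarrow> (\<forall>\<phi> \<phi>'. C1c \<phi> \<phi>' \<longrightarrow>
     (\<forall>i. (\<integral>x. f x * \<phi>' x (axis i 1) \<partial>lborel) = - (\<integral>x. g x $ i * \<phi> x \<partial>lborel)))"

definition sob_exp :: "nat \<Rightarrow> real" where
  "sob_exp N = 2 * real N / (real N - 2)"

definition strich_exp :: "nat \<Rightarrow> real" where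
  "strich_exp N = 2 * (real N + 1) / (real N - 2)"

text \<open>f is an element of \<dot>H^1(R^N) (realized in L^{2N/(N-2)}) with weak gradient g in L^2.\<close>
definition Hdot1 :: "(real^'n \<Rightarrow> real) \<Rightarrow> (real^'n \<Rightarrow> real^'n) \<Rightarrow> bool" where
  "Hdot1 f g \<longleftrightarrow> f \<in> borel_measurable lborel \<and> g \<in> borel_measurable lborel \<and>
     (\<integral>\<^sup>+x. ennreal (\<bar>f x\<bar> powr sob_exp CARD('n)) \<partial>lborel) < \<infinity> \<and>
     (\<integral>\<^sup>+x. ennreal (norm (g x) ^ 2) \<partial>lborel) < \<infinity> \<and> weak_grad f g"

definition L2 :: "(real^'n \<Rightarrow> real) \<Rightarrow> bool" where
  "L2 f \<longleftrightarrow> f \<in> borel_measurable lborel \<and> (\<integral>\<^sup>+x. ennreal ((f x)^2) \<partial>lborel) < \<infinity>"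

text \<open>Finite-energy solution U of the linear wave equation u_tt - \<Delta>u = 0 on R x R^N,
  with time derivative V and spatial gradient G:
  U \<in> C(R, \<dot>H^1), V = \<partial>_t U \<in> C(R, L^2), equation in the distributional sense.\<close>
definition fe_wave_sol :: "(real \<Rightarrow> real^'n \<Rightarrow> real) \<Rightarrow> (real \<Rightarrow> real^'n \<Rightarrow> real)
    \<Rightarrow> (real \<Rightarrow> real^'n \<Rightarrow> real^'n) \<Rightarrow> bool" where
  "fe_wave_sol U V G \<longleftrightarrow>
     (\<lambda>z. U (fst z) (snd z)) \<in> borel_measurable (lborel :: (real \<times> (real^'n)) measure) \<and>
     (\<lambda>z. V (fst z) (snd z)) \<in> borel_measurable (lborel :: (real \<times> (real^'n)) measure) \<and>
     (\<lambda>z. G (fst z) (snd z)) \<in> borel_measurable (lborel :: (real \<times> (real^'n)) measure) \<and>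
     (\<forall>t. Hdot1 (U t) (G t) \<and> L2 (V t)) \<and>
     (\<forall>t0. ((\<lambda>t. \<integral>\<^sup>+x. ennreal (norm (G t x - G t0 x) ^ 2) \<partial>lborel) \<longlongrightarrow> 0) (at t0)) \<and>
     (\<forall>t0. ((\<lambda>t. \<integral>\<^sup>+x. ennreal ((V t x - V t0 x) ^ 2) \<partial>lborel) \<longlongrightarrow> 0) (at t0)) \<and>
     (\<forall>\<psi> \<psi>'. C1c \<psi> \<psi>' \<longrightarrow>
        (\<integral>z. U (fst z) (snd z) * \<psi>' z (1, 0) \<partial>(lborel :: (real \<times> (real^'n)) measure))
        = - (\<integral>z. V (fst z) (snd z) * \<psi> z \<partial>lborel)) \<and>
     (\<forall>\<psi> \<psi>'. C1c \<psi> \<psi>' \<longrightarrow>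
        (\<integral>z. V (fst z) (snd z) * \<psi>' z (1, 0) \<partial>(lborel :: (real \<times> (real^'n)) measure))
        = (\<integral>z. G (fst z) (snd z) \<bullet> (\<chi> i. \<psi>' z (0, axis i 1)) \<partial>lborel))"

definition Snorm_p :: "(real \<Rightarrow> real^'n \<Rightarrow> real) \<Rightarrow> ennreal" where
  "Snorm_p f = (\<integral>\<^sup>+z. ennreal (\<bar>f (fst z) (snd z)\<bar> powr strich_exp CARD('n))
        \<partial>(lborel :: (real \<times> (real^'n)) measure))"

definition Snorm :: "(real \<Rightarrow> real^'n \<Rightarrow> real) \<Rightarrow> ennreal" where
  "Snorm f = (if Snorm_p f = \<infinity> then \<infinity>
              else ennreal (enn2real (Snorm_p f) powr (1 / strich_exp CARD('n))))"

definition resc :: "real \<Rightarrow> real \<Rightarrow> real^'n \<Rightarrow> (real \<Rightarrow> real^'n \<Rightarrow> real) \<Rightarrow> real \<Rightarrow> real^'n \<Rightarrow> real" where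
  "resc lam t0 x0 U = (\<lambda>t x. lam powr (1 - real CARD('n) / 2) *
       U ((t - t0) / lam) ((1 / lam) *\<^sub>R (x - x0)))"

definition orth_params :: "(nat \<Rightarrow> real) \<Rightarrow> (nat \<Rightarrow> real) \<Rightarrow> (nat \<Rightarrow> real^'n)
   \<Rightarrow> (nat \<Rightarrow> real) \<Rightarrow> (nat \<Rightarrow> real) \<Rightarrow> (nat \<Rightarrow> real^'n) \<Rightarrow> bool" where
  "orth_params lj tj xj lk tk xk \<longleftrightarrow>
     filterlim (\<lambda>n. \<bar>ln (lj n / lk n)\<bar> + \<bar>tj n - tk n\<bar> / lj n + norm (xj n - xk n) / lj n)
       at_top sequentially"

end

theory Submission
  imports Defs
begin

text \<open>The norm of \<open>S(\<real>)\<close> is an \<open>L\<^sup>p\<close> norm on space-time with \<open>p = 2(N+1)/(N-2)\<close>, and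
  every \<open>U\<^sup>j\<^sub>L\<^sub>,\<^sub>n\<close> is an \<open>L\<^sup>p\<close>-isometric rescaling of \<open>U\<^sup>j\<^sub>L\<close>. For \<open>K \<le> J\<close> the remainders
  at \<open>J\<close> and at \<open>K\<close> differ by the tail \<open>\<Sum>\<^sub>K\<^sub><\<^sub>j\<^sub>\<le>\<^sub>J U\<^sup>j\<^sub>L\<^sub>,\<^sub>n\<close>. Expanding the \<open>p\<close>-th power of
  the tail, everything but the diagonal is bounded by cross terms
  \<open>\<integral> \<bar>U\<^sup>j\<^sub>L\<^sub>,\<^sub>n\<bar> \<bar>U\<^sup>k\<^sub>L\<^sub>,\<^sub>n\<bar>\<^sup>p\<^sup>-\<^sup>1\<close> with \<open>j \<noteq> k\<close>, and these vanish as \<open>n \<rightarrow> \<infinity>\<close>: for bounded,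
  compactly supported profiles either the scales separate, which costs a factor
  \<open>exp (- a \<bar>log (\<lambda>\<^sub>j\<^sub>,\<^sub>n / \<lambda>\<^sub>k\<^sub>,\<^sub>n)\<bar>)\<close> with \<open>a = N/2 - 1\<close>, or the supports become disjoint; the general case
  follows by truncation. Hence \<open>limsup\<^sub>n\<close> of the tail is at most \<open>\<Sum>\<^sub>K\<^sub><\<^sub>j\<^sub>\<le>\<^sub>J \<parallel>U\<^sup>j\<^sub>L\<parallel>\<^sup>p\<close>, small for
  large \<open>K\<close> by summability, and taking \<open>K = J\<^sub>k\<close> with \<open>k\<close> large gives the claim.\<close>

lemma power_diff_le_mult_power:
  fixes x y :: real
  assumes "0 \<le> y" "y \<le> x"
  shows "x ^ Suc q - y ^ Suc q \<le> real (Suc q) * x ^ q * (x - y)"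
proof -
  have terms: "x ^ p * y ^ (q - p) \<le> x ^ q" if "p \<le> q" for p
  proof -
    have "x ^ p * y ^ (q - p) \<le> x ^ p * x ^ (q - p)"
      using assms by (intro mult_left_mono power_mono) auto
    also have "\<dots> = x ^ q" using that by (simp flip: power_add)
    finally show ?thesis .
  qed
  have "x ^ Suc q - y ^ Suc q = (x - y) * (\<Sum>p<Suc q. x ^ p * y ^ (q - p))"
    by (rule diff_power_eq_sum)
  also have "\<dots> \<le> (x - y) * (\<Sum>p<Suc q. x ^ q)"
    using assms terms by (intro mult_left_mono sum_mono) auto
  also have "\<dots> = real (Suc q) * x ^ q * (x - y)"
    by simp
  finally show ?thesis .
qed

text \<open>Expand around the largest term \<open>b m\<close>, using \<open>\<Sum>j\<in>F. b j \<le> card F * b m\<close>.\<close>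

lemma power_sum_le_sum_power_plus_cross:
  fixes b :: "'i \<Rightarrow> real"
  assumes F: "finite F" and b: "\<And>j. j \<in> F \<Longrightarrow> 0 \<le> b j"
  shows "(\<Sum>j\<in>F. b j) ^ Suc q \<le> (\<Sum>j\<in>F. b j ^ Suc q)
     + real (Suc q) * real (card F) ^ q * (\<Sum>j\<in>F. \<Sum>k\<in>F - {j}. b j * b k ^ q)"
proof (cases "F = {}")
  case False
  have "Max (b ` F) \<in> b ` F" using F False by (intro Max_in) auto
  then obtain m where "m \<in> F" "b m = Max (b ` F)" by auto
  then have m: "m \<in> F" "\<And>j. j \<in> F \<Longrightarrow> b j \<le> b m" using F by auto
  define S where "S = (\<Sum>j\<in>F. b j)"
  define C where "C = real (Suc q) * real (card F) ^ q"
  have Sm: "S = b m + (\<Sum>j\<in>F - {m}. b j)"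
    unfolding S_def using F m(1) by (simp add: sum.remove)
  have bm: "0 \<le> b m" "b m \<le> S"
    using b m Sm sum_nonneg[of "F - {m}" b] by auto
  have S_le: "S \<le> real (card F) * b m"
    unfolding S_def using sum_mono[of F b "\<lambda>_. b m"] m by simp
  have "S ^ Suc q - b m ^ Suc q \<le> real (Suc q) * S ^ q * (S - b m)"
    using bm by (rule power_diff_le_mult_power)
  also have "\<dots> \<le> real (Suc q) * (real (card F) * b m) ^ q * (S - b m)"
    using S_le bm by (intro mult_right_mono mult_left_mono power_mono) auto
  also have "\<dots> = C * (\<Sum>j\<in>F - {m}. b j * b m ^ q)"
    using Sm by (simp add: C_def power_mult_distrib sum_distrib_right sum_distrib_left mult_ac)
  also have "\<dots> \<le> C * (\<Sum>j\<in>F. \<Sum>k\<in>F - {j}. b j * b k ^ q)"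
  proof (rule mult_left_mono)
    have "(\<Sum>j\<in>F - {m}. b j * b m ^ q) \<le> (\<Sum>j\<in>F - {m}. \<Sum>k\<in>F - {j}. b j * b k ^ q)"
      using F b m(1) by (intro sum_mono member_le_sum) auto
    also have "\<dots> \<le> (\<Sum>j\<in>F. \<Sum>k\<in>F - {j}. b j * b k ^ q)"
      using F b by (intro sum_mono2) (auto intro!: sum_nonneg)
    finally show "(\<Sum>j\<in>F - {m}. b j * b m ^ q) \<le> (\<Sum>j\<in>F. \<Sum>k\<in>F - {j}. b j * b k ^ q)" .
  qed (simp add: C_def)
  finally have "S ^ Suc q \<le> b m ^ Suc q + C * (\<Sum>j\<in>F. \<Sum>k\<in>F - {j}. b j * b k ^ q)" by simp
  moreover have "b m ^ Suc q \<le> (\<Sum>j\<in>F. b j ^ Suc q)"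
    using F m(1) b by (intro member_le_sum) auto
  ultimately show ?thesis unfolding S_def C_def by simp
qed simp

lemma mult_power_le_young:
  fixes x y l :: real
  assumes "0 \<le> x" "0 \<le> y" "0 < l"
  shows "x * y ^ q \<le> l ^ q * x ^ Suc q + y ^ Suc q / l"
proof (cases "y \<le> l * x")
  case True
  then have "x * y ^ q \<le> x * (l * x) ^ q"
    using assms by (intro mult_left_mono power_mono) auto
  also have "\<dots> = l ^ q * x ^ Suc q" by (simp add: power_mult_distrib)
  finally show ?thesis using assms by (intro add_increasing2) auto
next
  case False
  then have "x * y ^ q \<le> (y / l) * y ^ q"
    using assms by (intro mult_right_mono) (auto simp: field_simps)
  then show ?thesis using assms by (intro add_increasing) (auto simp: mult_ac)
qed

lemma surj_power_ennreal:
  assumes "0 < n"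
  shows "surj (\<lambda>x::ennreal. x ^ n)"
proof -
  have "y \<in> range (\<lambda>x::ennreal. x ^ n)" for y
  proof (cases y)
    case (real r)
    then have "y = ennreal (root n r) ^ n"
      using assms by (simp add: ennreal_power real_root_pow_pos2)
    then show ?thesis by blast
  next
    case top
    then have "y = top ^ n" using assms by simp
    then show ?thesis by blast
  qed
  then show ?thesis by blast
qed

lemma continuous_on_power_ennreal:
  assumes "0 < n"
  shows "continuous_on UNIV (\<lambda>x::ennreal. x ^ n)"
  by (rule continuous_onI_mono) (simp_all add: surj_power_ennreal[OF assms] power_mono_ennreal)

lemma power_less_power_imp_less_ennreal: "(x::ennreal) ^ n < y ^ n \<Longrightarrow> x < y"
  using power_mono_ennreal[of y x n] by (meson not_le)

lemma ennreal_power_tendsto_0_iff: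
  fixes f :: "'a \<Rightarrow> ennreal"
  assumes n: "0 < n"
  shows "((\<lambda>k. f k ^ n) \<longlongrightarrow> 0) F \<longleftrightarrow> (f \<longlongrightarrow> 0) F"
proof
  assume "(f \<longlongrightarrow> 0) F"
  then have "((\<lambda>k. f k ^ n) \<longlongrightarrow> 0 ^ n) F"
    by (intro continuous_on_tendsto_compose[OF continuous_on_power_ennreal[OF n]]) auto
  then show "((\<lambda>k. f k ^ n) \<longlongrightarrow> 0) F" using n by (cases n) simp_all
next
  assume lim: "((\<lambda>k. f k ^ n) \<longlongrightarrow> 0) F"
  show "(f \<longlongrightarrow> 0) F"
  proof (rule order_tendstoI)
    fix u :: ennreal
    assume "0 < u"
    then obtain v :: ennreal where v: "0 < v" "v < u" by (meson dense)
    have "0 < v ^ n" using v(1) by (induction n) (simp_all add: ennreal_zero_less_mult_iff)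
    with lim have "eventually (\<lambda>k. f k ^ n < v ^ n) F" by (rule order_tendstoD(2))
    then show "eventually (\<lambda>k. f k < u) F"
      by (rule eventually_mono) (rule less_trans[OF power_less_power_imp_less_ennreal v(2)])
  qed simp
qed

lemma ennreal_tendsto_0I:
  assumes "\<And>e. 0 < e \<Longrightarrow> eventually (\<lambda>n. f n \<le> ennreal e) F"
  shows "(f \<longlongrightarrow> (0::ennreal)) F"
proof (rule order_tendstoI)
  fix u :: ennreal
  assume "0 < u"
  obtain e where e: "0 < e" "ennreal e < u"
  proof (cases u)
    case (real r)
    then show ?thesis using that[of "r / 2"] \<open>0 < u\<close> by (simp add: ennreal_lessI)
  next
    case top
    then show ?thesis using that[of 1] by simp
  qed
  show "eventually (\<lambda>n. f n < u) F"
    using assms[OF e(1)] by eventually_elim (use e in auto)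
qed simp

lemma ennreal_suminf_tail_le:
  fixes f :: "nat \<Rightarrow> ennreal"
  assumes fin: "(\<Sum>j. f (Suc j)) < \<infinity>" and d: "0 < d"
  obtains N0 where "\<And>m J. N0 \<le> m \<Longrightarrow> (\<Sum>j\<in>{Suc m..J}. f j) \<le> ennreal d"
proof -
  define r where "r j = enn2real (f (Suc j))" for j
  have fr: "f (Suc j) = ennreal (r j)" for j
    using ennreal_suminf_lessD[OF fin, of j] by (simp add: r_def ennreal_enn2real_if)
  have r0: "0 \<le> r j" for j by (simp add: r_def)
  have "summable r"
    by (rule summable_suminf_not_top) (use r0 fin in \<open>auto simp: fr[symmetric]\<close>)
  then obtain N0 where N0: "\<forall>m\<ge>N0. \<forall>n. norm (sum r {m..<n}) < d"
    using d unfolding summable_Cauchy by blast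
  have "(\<Sum>j\<in>{Suc m..J}. f j) \<le> ennreal d" if "N0 \<le> m" for m J
  proof -
    have "{Suc m..J} = Suc ` {m..<J}" by (simp add: atLeastLessThanSuc_atLeastAtMost)
    then have "(\<Sum>j\<in>{Suc m..J}. f j) = (\<Sum>k\<in>{m..<J}. f (Suc k))"
      by (simp only: sum.reindex[OF inj_on_subset[OF inj_Suc subset_UNIV], unfolded comp_def])
    also have "\<dots> = ennreal (sum r {m..<J})" using r0 by (simp add: fr)
    also have "\<dots> \<le> ennreal d"
    proof (intro ennreal_leI)
      have "norm (sum r {m..<J}) < d" using N0 that by blast
      then show "sum r {m..<J} \<le> d" by simp
    qed
    finally show ?thesis .
  qed
  then show ?thesis using that by blast
qed

section \<open>\<open>L\<^sup>p\<close> integrals of rescaled functions\<close>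

definition Lp_pow :: "nat \<Rightarrow> ('a::euclidean_space \<Rightarrow> real) \<Rightarrow> ennreal" where
  "Lp_pow p F = (\<integral>\<^sup>+z. ennreal (\<bar>F z\<bar> ^ p) \<partial>lborel)"

definition rescale :: "real \<Rightarrow> real \<Rightarrow> 'a::euclidean_space \<Rightarrow> ('a \<Rightarrow> real) \<Rightarrow> 'a \<Rightarrow> real" where
  "rescale a lam c F = (\<lambda>z. lam powr (- a) * F ((1 / lam) *\<^sub>R (z - c)))"

lemma measurable_rescale [measurable]:
  assumes [measurable]: "F \<in> borel_measurable borel"
  shows "rescale a lam c F \<in> borel_measurable borel"
  unfolding rescale_def by measurable

lemma rescale_mult:
  "rescale a lam c (\<lambda>z. F z * s z) = (\<lambda>z. rescale a lam c F z * s ((1 / lam) *\<^sub>R (z - c)))"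
  by (simp add: rescale_def fun_eq_iff)

lemma nn_integral_lborel_affine:
  fixes f :: "'a::euclidean_space \<Rightarrow> ennreal" and c :: real
  assumes [measurable]: "f \<in> borel_measurable borel" and c: "c \<noteq> 0"
  shows "(\<integral>\<^sup>+x. f x \<partial>lborel) = ennreal (\<bar>c\<bar> ^ DIM('a)) * (\<integral>\<^sup>+x. f (t + c *\<^sub>R x) \<partial>lborel)"
  by (subst lborel_affine[OF c, of t]) (simp add: nn_integral_density nn_integral_distr nn_integral_cmult)

lemma nn_integral_rescale:
  fixes G :: "'a::euclidean_space \<Rightarrow> ennreal"
  assumes [measurable]: "G \<in> borel_measurable borel" and lam: "0 < lam"
  shows "(\<integral>\<^sup>+z. G ((1 / lam) *\<^sub>R (z - c)) \<partial>lborel) = ennreal (lam ^ DIM('a)) * (\<integral>\<^sup>+x. G x \<partial>lborel)"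
proof -
  have "(\<integral>\<^sup>+z. G ((1 / lam) *\<^sub>R (z - c)) \<partial>lborel)
      = ennreal (\<bar>lam\<bar> ^ DIM('a)) * (\<integral>\<^sup>+x. G ((1 / lam) *\<^sub>R ((c + lam *\<^sub>R x) - c)) \<partial>lborel)"
    by (rule nn_integral_lborel_affine) (use lam in auto)
  also have "(\<lambda>x. G ((1 / lam) *\<^sub>R ((c + lam *\<^sub>R x) - c))) = G"
    using lam by (auto simp: fun_eq_iff)
  finally show ?thesis using lam by simp
qed

lemma rescale_abs_power:
  assumes lam: "0 < lam" and scaling: "a * real p = real DIM('a::euclidean_space)"
  shows "\<bar>rescale a lam c F z\<bar> ^ p = inverse (lam ^ DIM('a)) * \<bar>F ((1 / lam) *\<^sub>R (z - (c::'a)))\<bar> ^ p"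
proof -
  have "(lam powr (- a)) ^ p = lam powr (- a * real p)"
    using lam by (simp add: powr_realpow[symmetric] powr_powr)
  also have "\<dots> = lam powr (- real DIM('a))" using scaling by simp
  also have "\<dots> = inverse (lam ^ DIM('a))"
    using lam by (simp add: powr_minus powr_realpow)
  finally have e: "(lam powr (- a)) ^ p = inverse (lam ^ DIM('a))" .
  show ?thesis unfolding rescale_def using lam
    by (simp add: abs_mult power_mult_distrib e)
qed

lemma Lp_pow_rescale:
  fixes F :: "'a::euclidean_space \<Rightarrow> real"
  assumes [measurable]: "F \<in> borel_measurable borel" and lam: "0 < lam"
    and scaling: "a * real p = real DIM('a)"
  shows "Lp_pow p (rescale a lam c F) = Lp_pow p F"
proof -
  have "Lp_pow p (rescale a lam c F)
      = (\<integral>\<^sup>+z. ennreal (inverse (lam ^ DIM('a))) * ennreal (\<bar>F ((1 / lam) *\<^sub>R (z - c))\<bar> ^ p) \<partial>lborel)"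
    unfolding Lp_pow_def rescale_abs_power[OF lam scaling]
    using lam by (intro nn_integral_cong) (simp add: ennreal_mult)
  also have "\<dots> = ennreal (inverse (lam ^ DIM('a))) * (\<integral>\<^sup>+z. ennreal (\<bar>F ((1 / lam) *\<^sub>R (z - c))\<bar> ^ p) \<partial>lborel)"
    by (rule nn_integral_cmult) measurable
  also have "(\<integral>\<^sup>+z. ennreal (\<bar>F ((1 / lam) *\<^sub>R (z - c))\<bar> ^ p) \<partial>lborel) = ennreal (lam ^ DIM('a)) * Lp_pow p F"
    unfolding Lp_pow_def
    by (rule nn_integral_rescale[OF _ lam, where G = "\<lambda>w. ennreal (\<bar>F w\<bar> ^ p)"]) measurable
  also have "ennreal (inverse (lam ^ DIM('a))) * (ennreal (lam ^ DIM('a)) * Lp_pow p F) = Lp_pow p F"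
    using lam by (simp add: mult.assoc[symmetric] ennreal_mult[symmetric])
  finally show ?thesis .
qed

lemma Lp_pow_diff_le:
  fixes f g :: "'a::euclidean_space \<Rightarrow> real"
  assumes [measurable]: "f \<in> borel_measurable borel" "g \<in> borel_measurable borel"
  shows "Lp_pow p (\<lambda>z. f z - g z) \<le> ennreal (2 ^ p) * (Lp_pow p f + Lp_pow p g)"
proof -
  have "\<bar>x - y\<bar> ^ p \<le> 2 ^ p * (\<bar>x\<bar> ^ p + \<bar>y\<bar> ^ p)" for x y :: real
  proof -
    have "\<bar>x - y\<bar> ^ p \<le> (2 * max \<bar>x\<bar> \<bar>y\<bar>) ^ p" by (intro power_mono) auto
    also have "\<dots> \<le> 2 ^ p * (\<bar>x\<bar> ^ p + \<bar>y\<bar> ^ p)" by (simp add: power_mult_distrib max_def)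
    finally show ?thesis .
  qed
  then have "ennreal (\<bar>f z - g z\<bar> ^ p) \<le> ennreal (2 ^ p * (\<bar>f z\<bar> ^ p + \<bar>g z\<bar> ^ p))" for z
    by (intro ennreal_leI)
  also have "ennreal (2 ^ p * (\<bar>f z\<bar> ^ p + \<bar>g z\<bar> ^ p))
      = ennreal (2 ^ p) * (ennreal (\<bar>f z\<bar> ^ p) + ennreal (\<bar>g z\<bar> ^ p))" for z
    by (simp add: ennreal_mult ennreal_plus[symmetric] del: ennreal_plus)
  finally have "ennreal (\<bar>f z - g z\<bar> ^ p) \<le> ennreal (2 ^ p) * (ennreal (\<bar>f z\<bar> ^ p) + ennreal (\<bar>g z\<bar> ^ p))" for z .
  then have "Lp_pow p (\<lambda>z. f z - g z)
      \<le> (\<integral>\<^sup>+z. ennreal (2 ^ p) * (ennreal (\<bar>f z\<bar> ^ p) + ennreal (\<bar>g z\<bar> ^ p)) \<partial>lborel)"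
    unfolding Lp_pow_def by (intro nn_integral_mono)
  also have "\<dots> = ennreal (2 ^ p) * (Lp_pow p f + Lp_pow p g)"
    unfolding Lp_pow_def by (simp add: nn_integral_cmult nn_integral_add)
  finally show ?thesis .
qed

lemma Lp_pow_truncation_small:
  fixes F :: "'a::euclidean_space \<Rightarrow> real"
  assumes [measurable]: "F \<in> borel_measurable borel"
    and fin: "Lp_pow p F < \<infinity>" and p: "0 < p" and d: "0 < d"
  obtains s :: "'a \<Rightarrow> real" and M R where "s \<in> borel_measurable borel" "\<And>z. s z = 0 \<or> s z = 1"
    "\<And>z. \<bar>F z * s z\<bar> \<le> M" "\<And>z. R < norm z \<Longrightarrow> F z * s z = 0"
    "Lp_pow p (\<lambda>z. F z * (1 - s z)) < ennreal d"
proof -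
  define h where "h i z = ennreal (\<bar>F z\<bar> ^ p) * indicator {z. \<not> (\<bar>F z\<bar> \<le> real i \<and> norm z \<le> real i)} z"
    for i :: nat and z
  have h_meas [measurable]: "h i \<in> borel_measurable lborel" for i
    unfolding h_def by measurable
  have "decseq h"
    by (intro decseq_SucI le_funI) (auto simp: h_def indicator_def)
  moreover have "(\<integral>\<^sup>+z. h i z \<partial>lborel) < \<infinity>" for i
  proof -
    have "(\<integral>\<^sup>+z. h i z \<partial>lborel) \<le> Lp_pow p F"
      unfolding Lp_pow_def h_def by (intro nn_integral_mono) (auto simp: indicator_def)
    then show ?thesis using fin by simp
  qed
  moreover have "(INF i. h i z) = 0" for z
  proof -
    obtain i :: nat where "max \<bar>F z\<bar> (norm z) \<le> real i"
      using real_arch_simple by blast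
    then have "h i z = 0" by (simp add: h_def)
    then show ?thesis by (metis INF_lower UNIV_I le_zero_eq)
  qed
  ultimately have "(INF i. integral\<^sup>N lborel (h i)) = 0"
    using nn_integral_monotone_convergence_INF_decseq[of h lborel] by simp
  then obtain i where i: "integral\<^sup>N lborel (h i) < ennreal d"
    using d by (metis INF_less_iff ennreal_0 ennreal_less_iff order.refl)
  let ?s = "indicator {z. \<bar>F z\<bar> \<le> real i \<and> norm z \<le> real i} :: 'a \<Rightarrow> real"
  have eq: "integral\<^sup>N lborel (h i) = Lp_pow p (\<lambda>z. F z * (1 - ?s z))"
    unfolding Lp_pow_def h_def using p by (intro nn_integral_cong) (auto simp: indicator_def)
  show ?thesis
  proof (rule that)
    show "?s \<in> borel_measurable borel" by measurable
    show "?s z = 0 \<or> ?s z = 1" "\<bar>F z * ?s z\<bar> \<le> real i" "real i < norm z \<Longrightarrow> F z * ?s z = 0" for z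
      by (auto simp: indicator_def)
    show "Lp_pow p (\<lambda>z. F z * (1 - ?s z)) < ennreal d" using i unfolding eq .
  qed
qed

definition cross_integral :: "nat \<Rightarrow> ('a::euclidean_space \<Rightarrow> real) \<Rightarrow> ('a \<Rightarrow> real) \<Rightarrow> ennreal" where
  "cross_integral q X Y = (\<integral>\<^sup>+z. ennreal (\<bar>X z\<bar> * \<bar>Y z\<bar> ^ q) \<partial>lborel)"

lemma Lp_pow_sum_le_cross:
  fixes T :: "'i \<Rightarrow> 'a::euclidean_space \<Rightarrow> real"
  assumes F: "finite F" and [measurable]: "\<And>j. j \<in> F \<Longrightarrow> T j \<in> borel_measurable borel"
  shows "Lp_pow (Suc q) (\<lambda>z. \<Sum>j\<in>F. T j z) \<le> (\<Sum>j\<in>F. Lp_pow (Suc q) (T j))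
     + ennreal (real (Suc q) * real (card F) ^ q) * (\<Sum>j\<in>F. \<Sum>k\<in>F - {j}. cross_integral q (T j) (T k))"
proof -
  define C where "C = real (Suc q) * real (card F) ^ q"
  have "0 \<le> C" by (simp add: C_def)
  have m1: "(\<lambda>z. ennreal (\<bar>T j z\<bar> ^ Suc q)) \<in> borel_measurable lborel" if "j \<in> F" for j
    using that by measurable
  have m2: "(\<lambda>z. ennreal (\<bar>T j z\<bar> * \<bar>T k z\<bar> ^ q)) \<in> borel_measurable lborel"
    if "j \<in> F" "k \<in> F - {j}" for j k
  proof -
    have "k \<in> F" using that by simp
    with that(1) show ?thesis by measurable
  qed
  have "ennreal (\<bar>\<Sum>j\<in>F. T j z\<bar> ^ Suc q) \<le> (\<Sum>j\<in>F. ennreal (\<bar>T j z\<bar> ^ Suc q))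
      + ennreal C * (\<Sum>j\<in>F. \<Sum>k\<in>F - {j}. ennreal (\<bar>T j z\<bar> * \<bar>T k z\<bar> ^ q))" for z
  proof -
    have "\<bar>\<Sum>j\<in>F. T j z\<bar> ^ Suc q \<le> (\<Sum>j\<in>F. \<bar>T j z\<bar>) ^ Suc q"
      by (intro power_mono sum_abs) simp
    also have "\<dots> \<le> (\<Sum>j\<in>F. \<bar>T j z\<bar> ^ Suc q) + C * (\<Sum>j\<in>F. \<Sum>k\<in>F - {j}. \<bar>T j z\<bar> * \<bar>T k z\<bar> ^ q)"
      unfolding C_def by (rule power_sum_le_sum_power_plus_cross[OF F]) simp
    finally have "\<bar>\<Sum>j\<in>F. T j z\<bar> ^ Suc q
        \<le> (\<Sum>j\<in>F. \<bar>T j z\<bar> ^ Suc q) + C * (\<Sum>j\<in>F. \<Sum>k\<in>F - {j}. \<bar>T j z\<bar> * \<bar>T k z\<bar> ^ q)" .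
    then have "ennreal (\<bar>\<Sum>j\<in>F. T j z\<bar> ^ Suc q)
        \<le> ennreal ((\<Sum>j\<in>F. \<bar>T j z\<bar> ^ Suc q) + C * (\<Sum>j\<in>F. \<Sum>k\<in>F - {j}. \<bar>T j z\<bar> * \<bar>T k z\<bar> ^ q))"
      by (intro ennreal_leI)
    also have "\<dots> = (\<Sum>j\<in>F. ennreal (\<bar>T j z\<bar> ^ Suc q))
        + ennreal C * (\<Sum>j\<in>F. \<Sum>k\<in>F - {j}. ennreal (\<bar>T j z\<bar> * \<bar>T k z\<bar> ^ q))"
      using \<open>0 \<le> C\<close> by (simp add: ennreal_plus[symmetric] ennreal_mult[symmetric] sum_nonneg del: ennreal_plus)
    finally show ?thesis .
  qed
  then have "Lp_pow (Suc q) (\<lambda>z. \<Sum>j\<in>F. T j z) \<le> (\<integral>\<^sup>+z. (\<Sum>j\<in>F. ennreal (\<bar>T j z\<bar> ^ Suc q))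
      + ennreal C * (\<Sum>j\<in>F. \<Sum>k\<in>F - {j}. ennreal (\<bar>T j z\<bar> * \<bar>T k z\<bar> ^ q)) \<partial>lborel)"
    unfolding Lp_pow_def by (intro nn_integral_mono)
  also have "\<dots> = (\<integral>\<^sup>+z. (\<Sum>j\<in>F. ennreal (\<bar>T j z\<bar> ^ Suc q)) \<partial>lborel)
      + (\<integral>\<^sup>+z. ennreal C * (\<Sum>j\<in>F. \<Sum>k\<in>F - {j}. ennreal (\<bar>T j z\<bar> * \<bar>T k z\<bar> ^ q)) \<partial>lborel)"
    by (rule nn_integral_add) (auto intro!: borel_measurable_sum borel_measurable_times_ennreal m1 m2)
  also have "(\<integral>\<^sup>+z. (\<Sum>j\<in>F. ennreal (\<bar>T j z\<bar> ^ Suc q)) \<partial>lborel) = (\<Sum>j\<in>F. Lp_pow (Suc q) (T j))"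
    unfolding Lp_pow_def by (rule nn_integral_sum) (auto intro!: m1)
  also have "(\<integral>\<^sup>+z. ennreal C * (\<Sum>j\<in>F. \<Sum>k\<in>F - {j}. ennreal (\<bar>T j z\<bar> * \<bar>T k z\<bar> ^ q)) \<partial>lborel)
      = ennreal C * (\<integral>\<^sup>+z. (\<Sum>j\<in>F. \<Sum>k\<in>F - {j}. ennreal (\<bar>T j z\<bar> * \<bar>T k z\<bar> ^ q)) \<partial>lborel)"
    by (rule nn_integral_cmult) (auto intro!: borel_measurable_sum borel_measurable_times_ennreal m1 m2)
  also have "(\<integral>\<^sup>+z. (\<Sum>j\<in>F. \<Sum>k\<in>F - {j}. ennreal (\<bar>T j z\<bar> * \<bar>T k z\<bar> ^ q)) \<partial>lborel)
      = (\<Sum>j\<in>F. \<integral>\<^sup>+z. (\<Sum>k\<in>F - {j}. ennreal (\<bar>T j z\<bar> * \<bar>T k z\<bar> ^ q)) \<partial>lborel)"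
    by (rule nn_integral_sum) (auto intro!: borel_measurable_sum borel_measurable_times_ennreal m1 m2)
  also have "\<dots> = (\<Sum>j\<in>F. \<Sum>k\<in>F - {j}. cross_integral q (T j) (T k))"
    unfolding cross_integral_def by (intro sum.cong refl nn_integral_sum) (auto intro!: m2)
  finally show ?thesis unfolding C_def .
qed

lemma cross_integral_le_young:
  fixes X Y :: "'a::euclidean_space \<Rightarrow> real"
  assumes [measurable]: "X \<in> borel_measurable borel" "Y \<in> borel_measurable borel" and l: "0 < l"
  shows "cross_integral q X Y \<le> ennreal (l ^ q) * Lp_pow (Suc q) X + ennreal (1 / l) * Lp_pow (Suc q) Y"
proof -
  have "ennreal (\<bar>X z\<bar> * \<bar>Y z\<bar> ^ q) \<le> ennreal (l ^ q * \<bar>X z\<bar> ^ Suc q + \<bar>Y z\<bar> ^ Suc q / l)" for z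
    using l by (intro ennreal_leI mult_power_le_young) auto
  also have "ennreal (l ^ q * \<bar>X z\<bar> ^ Suc q + \<bar>Y z\<bar> ^ Suc q / l)
      = ennreal (l ^ q) * ennreal (\<bar>X z\<bar> ^ Suc q) + ennreal (1 / l) * ennreal (\<bar>Y z\<bar> ^ Suc q)" for z
    using l by (simp add: ennreal_plus[symmetric] ennreal_mult[symmetric] del: ennreal_plus)
  finally have "ennreal (\<bar>X z\<bar> * \<bar>Y z\<bar> ^ q)
      \<le> ennreal (l ^ q) * ennreal (\<bar>X z\<bar> ^ Suc q) + ennreal (1 / l) * ennreal (\<bar>Y z\<bar> ^ Suc q)" for z .
  then have "cross_integral q X Y \<le> (\<integral>\<^sup>+z. ennreal (l ^ q) * ennreal (\<bar>X z\<bar> ^ Suc q)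
      + ennreal (1 / l) * ennreal (\<bar>Y z\<bar> ^ Suc q) \<partial>lborel)"
    unfolding cross_integral_def by (intro nn_integral_mono)
  also have "\<dots> = ennreal (l ^ q) * Lp_pow (Suc q) X + ennreal (1 / l) * Lp_pow (Suc q) Y"
    unfolding Lp_pow_def by (simp add: nn_integral_add nn_integral_cmult)
  finally show ?thesis .
qed

section \<open>Cross terms of orthogonally rescaled functions\<close>

lemma rescale_abs_le_indicator:
  fixes F :: "'a::euclidean_space \<Rightarrow> real"
  assumes "\<And>z. \<bar>F z\<bar> \<le> M" "\<And>z. R < norm z \<Longrightarrow> F z = 0" and "0 < lam"
  shows "\<bar>rescale a lam c F z\<bar> \<le> lam powr (- a) * M * indicator (cball 0 R) ((1 / lam) *\<^sub>R (z - c))"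
  using assms by (cases "norm ((1 / lam) *\<^sub>R (z - c)) \<le> R")
    (auto simp: rescale_def abs_mult indicator_def mult_left_mono)

lemma rescale_cross_le_indicator:
  fixes F G :: "'a::euclidean_space \<Rightarrow> real"
  assumes bF: "\<And>z. \<bar>F z\<bar> \<le> M" "\<And>z. R < norm z \<Longrightarrow> F z = 0"
    and bG: "\<And>z. \<bar>G z\<bar> \<le> M" "\<And>z. R < norm z \<Longrightarrow> G z = 0"
    and lam: "0 < lam" "0 < lam'" and q: "1 \<le> q"
  shows "\<bar>rescale a lam c F z\<bar> * \<bar>rescale a lam' c' G z\<bar> ^ q
    \<le> M ^ Suc q * (lam powr (- a) * lam' powr (- a * real q))
      * (indicator (cball 0 R) ((1 / lam) *\<^sub>R (z - c)) * indicator (cball 0 R) ((1 / lam') *\<^sub>R (z - c')))"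
proof -
  define i1 :: real where "i1 = indicator (cball 0 R) ((1 / lam) *\<^sub>R (z - c))"
  define i2 :: real where "i2 = indicator (cball 0 R) ((1 / lam') *\<^sub>R (z - c'))"
  have "0 \<le> M" using bF(1)[of 0] by simp
  have "\<bar>rescale a lam c F z\<bar> \<le> lam powr (- a) * M * i1"
    unfolding i1_def by (rule rescale_abs_le_indicator[where F = F and M = M and R = R, OF bF lam(1)])
  moreover have "\<bar>rescale a lam' c' G z\<bar> \<le> lam' powr (- a) * M * i2"
    unfolding i2_def by (rule rescale_abs_le_indicator[where F = G and M = M and R = R, OF bG lam(2)])
  ultimately have "\<bar>rescale a lam c F z\<bar> * \<bar>rescale a lam' c' G z\<bar> ^ q
      \<le> (lam powr (- a) * M * i1) * (lam' powr (- a) * M * i2) ^ q"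
    by (intro mult_mono power_mono) auto
  also have "\<dots> = M ^ Suc q * (lam powr (- a) * lam' powr (- a * real q)) * (i1 * i2)"
  proof -
    have "i2 ^ q = i2" using q by (cases q) (auto simp: i2_def indicator_def)
    moreover have "(lam' powr (- a)) ^ q = lam' powr (- a * real q)"
      using lam by (simp add: powr_powr flip: powr_realpow)
    ultimately show ?thesis by (simp add: power_mult_distrib algebra_simps)
  qed
  finally show ?thesis unfolding i1_def i2_def .
qed

lemma nn_integral_indicator_rescaled_cball:
  fixes d :: "'a::euclidean_space"
  assumes "0 < l"
  shows "(\<integral>\<^sup>+z. ennreal (indicator (cball 0 R) ((1 / l) *\<^sub>R (z - d))) \<partial>lborel)
    = ennreal (l ^ DIM('a) * measure lborel (cball (0::'a) R))"
proof -
  have "(\<integral>\<^sup>+z. ennreal (indicator (cball 0 R) ((1 / l) *\<^sub>R (z - d))) \<partial>lborel)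
      = ennreal (l ^ DIM('a)) * emeasure lborel (cball (0::'a) R)"
    unfolding ennreal_indicator using assms
    by (subst nn_integral_rescale) (auto intro: borel_measurable_indicator borel_closed)
  also have "emeasure lborel (cball (0::'a) R) = ennreal (measure lborel (cball (0::'a) R))"
    using emeasure_lborel_cball_finite[of "0::'a" R] by (intro emeasure_eq_ennreal_measure) auto
  finally show ?thesis using assms by (simp add: ennreal_mult)
qed

text \<open>Comparing scales: the smaller support carries the measure, so the weights of the
  two rescaled profiles leave the factor \<open>exp (- a * \<bar>ln (l / l')\<bar>)\<close>.\<close>

lemma powr_scales_le_exp:
  fixes l l' a q :: real
  assumes l: "0 < l" "0 < l'" and a: "0 < a" and q: "1 \<le> q"
  shows "l powr (- a) * l' powr (- a * q) * min l l' powr (a * (q + 1)) \<le> exp (- a * \<bar>ln (l / l')\<bar>)"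
proof -
  have "l powr (- a) * l' powr (- a * q) * min l l' powr (a * (q + 1))
      = exp (- a * ln l - a * q * ln l' + a * (q + 1) * ln (min l l'))"
    using l by (simp add: powr_def mult_exp_exp algebra_simps)
  also have "\<dots> \<le> exp (- a * \<bar>ln (l / l')\<bar>)"
  proof (cases "l \<le> l'")
    case True
    then have "0 \<le> ln l' - ln l" using l by simp
    then have "a * (ln l' - ln l) \<le> (a * q) * (ln l' - ln l)"
      using a q by (intro mult_right_mono) auto
    then show ?thesis using True l by (simp add: ln_div min_def algebra_simps)
  next
    case False
    then show ?thesis using l by (simp add: ln_div min_def algebra_simps)
  qed
  finally show ?thesis .
qed

lemma cross_integral_rescaled_le:
  fixes F G :: "'a::euclidean_space \<Rightarrow> real"
  assumes bF: "\<And>z. \<bar>F z\<bar> \<le> M" "\<And>z. R < norm z \<Longrightarrow> F z = 0"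
    and bG: "\<And>z. \<bar>G z\<bar> \<le> M" "\<And>z. R < norm z \<Longrightarrow> G z = 0"
    and lam: "0 < lam" "0 < lam'" and q: "1 \<le> q" and a: "0 < a"
    and scaling: "a * real (Suc q) = real DIM('a)"
  shows "cross_integral q (rescale a lam c F) (rescale a lam' c' G)
    \<le> ennreal (M ^ Suc q * measure lborel (cball (0::'a) R) * exp (- a * \<bar>ln (lam / lam')\<bar>))"
proof -
  define m0 where "m0 = measure lborel (cball (0::'a) R)"
  define K where "K = M ^ Suc q * (lam powr (- a) * lam' powr (- a * real q))"
  define i where "i l d z = (indicator (cball 0 R) ((1 / l) *\<^sub>R (z - d :: 'a)) :: real)" for l d z
  have "0 \<le> M" using bF(1)[of 0] by simp
  then have "0 \<le> K" by (simp add: K_def)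
  have [measurable]: "i l d \<in> borel_measurable borel" for l d
    unfolding i_def
    by (rule measurable_compose[OF _ borel_measurable_indicator[OF borel_closed[OF closed_cball]]])
      measurable
  have ind: "(\<integral>\<^sup>+z. ennreal (i lam c z * i lam' c' z) \<partial>lborel) \<le> ennreal (min lam lam' ^ DIM('a) * m0)"
  proof (cases "lam \<le> lam'")
    case True
    have "(\<integral>\<^sup>+z. ennreal (i lam c z * i lam' c' z) \<partial>lborel) \<le> (\<integral>\<^sup>+z. ennreal (i lam c z) \<partial>lborel)"
      by (intro nn_integral_mono) (simp add: i_def indicator_def)
    then show ?thesis
      using True nn_integral_indicator_rescaled_cball[where R = R and d = c, OF lam(1)] by (simp add: i_def m0_def)
  next
    case False
    have "(\<integral>\<^sup>+z. ennreal (i lam c z * i lam' c' z) \<partial>lborel) \<le> (\<integral>\<^sup>+z. ennreal (i lam' c' z) \<partial>lborel)"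
      by (intro nn_integral_mono) (simp add: i_def indicator_def)
    then show ?thesis
      using False nn_integral_indicator_rescaled_cball[where R = R and d = c', OF lam(2)] by (simp add: i_def m0_def)
  qed
  have "cross_integral q (rescale a lam c F) (rescale a lam' c' G)
      \<le> (\<integral>\<^sup>+z. ennreal K * ennreal (i lam c z * i lam' c' z) \<partial>lborel)"
    unfolding cross_integral_def i_def K_def
    using rescale_cross_le_indicator[where F = F and G = G and M = M and R = R, OF bF bG lam q] \<open>0 \<le> K\<close>
    by (intro nn_integral_mono) (simp add: K_def ennreal_leI flip: ennreal_mult)
  also have "\<dots> = ennreal K * (\<integral>\<^sup>+z. ennreal (i lam c z * i lam' c' z) \<partial>lborel)"
    by (rule nn_integral_cmult) measurable
  also have "\<dots> \<le> ennreal K * ennreal (min lam lam' ^ DIM('a) * m0)"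
    using ind by (rule mult_left_mono) simp
  also have "\<dots> = ennreal (K * (min lam lam' ^ DIM('a) * m0))"
    using \<open>0 \<le> K\<close> lam by (intro ennreal_mult[symmetric]) (auto simp: m0_def)
  also have "min lam lam' ^ DIM('a) = min lam lam' powr (a * (real q + 1))"
  proof -
    have "a * (real q + 1) = real DIM('a)" using scaling by (simp add: ac_simps)
    then show ?thesis using lam by (simp add: powr_realpow)
  qed
  also have "K * (min lam lam' powr (a * (real q + 1)) * m0)
      = M ^ Suc q * m0 * (lam powr (- a) * lam' powr (- a * real q) * min lam lam' powr (a * (real q + 1)))"
    by (simp add: K_def)
  also have "\<dots> \<le> ennreal (M ^ Suc q * m0 * exp (- a * \<bar>ln (lam / lam')\<bar>))"
    using powr_scales_le_exp[OF lam a, of "real q"] q \<open>0 \<le> M\<close>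
    by (intro ennreal_leI mult_left_mono) (auto simp: m0_def)
  finally show ?thesis unfolding m0_def .
qed

lemma cross_integral_rescaled_far_eq_0:
  fixes F G :: "'a::euclidean_space \<Rightarrow> real"
  assumes bF: "\<And>z. \<bar>F z\<bar> \<le> M" "\<And>z. R < norm z \<Longrightarrow> F z = 0"
    and bG: "\<And>z. \<bar>G z\<bar> \<le> M" "\<And>z. R < norm z \<Longrightarrow> G z = 0"
    and lam: "0 < lam" "0 < lam'" and q: "1 \<le> q"
    and far: "R * (lam + lam') < dist c c'"
  shows "cross_integral q (rescale a lam c F) (rescale a lam' c' G) = 0"
proof -
  have "indicator (cball 0 R) ((1 / lam) *\<^sub>R (z - c)) * indicator (cball 0 R) ((1 / lam') *\<^sub>R (z - c')) = (0::real)"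
    for z
  proof (rule ccontr)
    assume "\<not> ?thesis"
    then have "norm (z - c) / lam \<le> R" "norm (z - c') / lam' \<le> R"
      using lam by (auto simp: indicator_def split: if_splits)
    then have "dist c z \<le> R * lam" "dist z c' \<le> R * lam'"
      using lam by (simp_all add: divide_le_eq dist_norm norm_minus_commute mult.commute)
    then have "dist c c' \<le> R * lam + R * lam'"
      using dist_triangle[of c c' z] by linarith
    then show False using far by (simp add: distrib_left)
  qed
  note disjoint = this
  have "\<bar>rescale a lam c F z\<bar> * \<bar>rescale a lam' c' G z\<bar> ^ q \<le> 0" for z
  proof -
    have "\<bar>rescale a lam c F z\<bar> * \<bar>rescale a lam' c' G z\<bar> ^ q
        \<le> M ^ Suc q * (lam powr (- a) * lam' powr (- a * real q))
          * (indicator (cball 0 R) ((1 / lam) *\<^sub>R (z - c)) * indicator (cball 0 R) ((1 / lam') *\<^sub>R (z - c')))"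
      by (rule rescale_cross_le_indicator[where F = F and G = G and M = M and R = R, OF bF bG lam q])
    also have "\<dots> = 0" by (simp only: disjoint mult_zero_right)
    finally show ?thesis .
  qed
  then have zero: "\<bar>rescale a lam c F z\<bar> * \<bar>rescale a lam' c' G z\<bar> ^ q = 0" for z
    by (intro order_antisym) auto
  show ?thesis unfolding cross_integral_def by (simp only: zero ennreal_0) simp
qed

lemma eventually_scales_apart_or_far:
  fixes c c' :: "nat \<Rightarrow> 'a::real_normed_vector"
  assumes lam: "\<And>n. 0 < lam n" "\<And>n. 0 < lam' n" and R: "0 \<le> R"
    and orth: "filterlim (\<lambda>n. \<bar>ln (lam n / lam' n)\<bar> + dist (c n) (c' n) / lam n) at_top sequentially"
  shows "eventually (\<lambda>n. K \<le> \<bar>ln (lam n / lam' n)\<bar> \<or> R * (lam n + lam' n) < dist (c n) (c' n)) sequentially"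
proof -
  have "eventually (\<lambda>n. K + R * (1 + exp K) < \<bar>ln (lam n / lam' n)\<bar> + dist (c n) (c' n) / lam n) sequentially"
    using orth by (simp add: filterlim_at_top_dense)
  then show ?thesis
  proof eventually_elim
    case (elim n)
    show ?case
    proof (rule ccontr)
      assume "\<not> ?case"
      then have close: "\<bar>ln (lam n / lam' n)\<bar> < K" and near: "dist (c n) (c' n) \<le> R * (lam n + lam' n)"
        by auto
      from close have "exp (- K) < lam n / lam' n"
        using lam[of n] by (metis abs_less_iff divide_pos_pos exp_less_cancel_iff exp_ln minus_less_iff)
      then have "lam' n < exp K * lam n"
        using lam[of n] by (simp add: exp_minus field_simps)
      then have "R * lam' n \<le> R * (exp K * lam n)"
        using R by (intro mult_left_mono) auto
      then have "dist (c n) (c' n) \<le> R * (1 + exp K) * lam n"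
        using near by (simp add: algebra_simps)
      then have "dist (c n) (c' n) / lam n \<le> R * (1 + exp K)"
        using lam[of n] by (simp add: divide_le_eq)
      with close elim show False by linarith
    qed
  qed
qed

lemma exp_neg_mult_tendsto_0:
  fixes a C :: real
  assumes "0 < a"
  shows "((\<lambda>x. C * exp (- a * x)) \<longlongrightarrow> 0) at_top"
proof -
  have "filterlim (\<lambda>x. a * x) at_top at_top"
    using assms by (intro filterlim_tendsto_pos_mult_at_top[OF tendsto_const]) (auto simp: filterlim_ident)
  then have "filterlim (\<lambda>x. - a * x) at_bot at_top"
    by (simp add: filterlim_uminus_at_bot)
  then have "((\<lambda>x. exp (- a * x)) \<longlongrightarrow> 0) at_top"
    by (rule filterlim_compose[OF exp_at_bot])
  then show ?thesis by (rule tendsto_mult_right_zero)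
qed

lemma cross_integral_rescaled_bounded_tendsto_0:
  fixes F G :: "'a::euclidean_space \<Rightarrow> real"
  assumes bF: "\<And>z. \<bar>F z\<bar> \<le> M" "\<And>z. R < norm z \<Longrightarrow> F z = 0"
    and bG: "\<And>z. \<bar>G z\<bar> \<le> M" "\<And>z. R < norm z \<Longrightarrow> G z = 0"
    and R: "0 \<le> R" and lam: "\<And>n. 0 < lam n" "\<And>n. 0 < lam' n"
    and q: "1 \<le> q" and a: "0 < a" and scaling: "a * real (Suc q) = real DIM('a)"
    and orth: "filterlim (\<lambda>n. \<bar>ln (lam n / lam' n)\<bar> + dist (c n) (c' n) / lam n) at_top sequentially"
  shows "(\<lambda>n. cross_integral q (rescale a (lam n) (c n) F) (rescale a (lam' n) (c' n) G)) \<longlonglongrightarrow> 0"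
proof (rule ennreal_tendsto_0I)
  fix e :: real
  assume "0 < e"
  define C0 where "C0 = M ^ Suc q * measure lborel (cball (0::'a) R)"
  obtain K where K: "\<And>x. K \<le> x \<Longrightarrow> C0 * exp (- a * x) < e"
    using order_tendstoD(2)[OF exp_neg_mult_tendsto_0[OF a, of C0] \<open>0 < e\<close>]
    by (auto simp: eventually_at_top_linorder)
  show "eventually (\<lambda>n. cross_integral q (rescale a (lam n) (c n) F) (rescale a (lam' n) (c' n) G) \<le> ennreal e)
      sequentially"
    using eventually_scales_apart_or_far[OF lam R orth, of K]
  proof eventually_elim
    case (elim n)
    then show ?case
    proof
      assume "K \<le> \<bar>ln (lam n / lam' n)\<bar>"
      then have "ennreal (C0 * exp (- a * \<bar>ln (lam n / lam' n)\<bar>)) \<le> ennreal e"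
        using K by (intro ennreal_leI less_imp_le)
      then show ?thesis
        using cross_integral_rescaled_le[where F = F and G = G and M = M and R = R, OF bF bG lam(1)[of n] lam(2)[of n] q a scaling]
        unfolding C0_def by (rule order_trans[rotated])
    next
      assume "R * (lam n + lam' n) < dist (c n) (c' n)"
      then show ?thesis
        using cross_integral_rescaled_far_eq_0[where F = F and G = G and M = M and R = R, OF bF bG lam(1)[of n] lam(2)[of n] q] by simp
    qed
  qed
qed

lemma cross_integral_small_if_first_small:
  assumes B: "0 \<le> B" and e: "0 < e"
  obtains d where "0 < d"
    "\<And>X Y :: 'a::euclidean_space \<Rightarrow> real. X \<in> borel_measurable borel \<Longrightarrow> Y \<in> borel_measurable borel \<Longrightarrow>
      Lp_pow (Suc q) Y \<le> ennreal B \<Longrightarrow> Lp_pow (Suc q) X < ennreal d \<Longrightarrow> cross_integral q X Y \<le> ennreal e"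
proof -
  define l where "l = 2 * (B + 1) / e"
  have l: "0 < l" using B e by (simp add: l_def)
  define d where "d = e / (2 * l ^ q)"
  have "cross_integral q X Y \<le> ennreal e"
    if "X \<in> borel_measurable borel" "Y \<in> borel_measurable borel"
      and Y: "Lp_pow (Suc q) Y \<le> ennreal B" and X: "Lp_pow (Suc q) X < ennreal d"
    for X Y :: "'a \<Rightarrow> real"
  proof -
    have "cross_integral q X Y \<le> ennreal (l ^ q) * Lp_pow (Suc q) X + ennreal (1 / l) * Lp_pow (Suc q) Y"
      using that(1,2) l by (rule cross_integral_le_young)
    also have "\<dots> \<le> ennreal (l ^ q) * ennreal d + ennreal (1 / l) * ennreal B"
      using X Y by (intro add_mono mult_left_mono) auto
    also have "\<dots> = ennreal (e / 2 + B / l)"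
      using l B e by (simp add: d_def ennreal_mult[symmetric] ennreal_plus[symmetric] del: ennreal_plus)
    also have "B / l \<le> e / 2"
      using B e by (simp add: l_def field_simps)
    finally show ?thesis by (simp add: ennreal_leI)
  qed
  moreover have "0 < d" using e l by (simp add: d_def)
  ultimately show ?thesis using that by blast
qed

lemma cross_integral_small_if_second_small:
  assumes B: "0 \<le> B" and e: "0 < e" and q: "1 \<le> q"
  obtains d where "0 < d"
    "\<And>X Y :: 'a::euclidean_space \<Rightarrow> real. X \<in> borel_measurable borel \<Longrightarrow> Y \<in> borel_measurable borel \<Longrightarrow>
      Lp_pow (Suc q) X \<le> ennreal B \<Longrightarrow> Lp_pow (Suc q) Y < ennreal d \<Longrightarrow> cross_integral q X Y \<le> ennreal e"
proof -
  define l where "l = root q (e / (2 * (B + 1)))"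
  have l: "0 < l" "l ^ q = e / (2 * (B + 1))"
    using B e q by (simp_all add: l_def real_root_pow_pos)
  define d where "d = e * l / 2"
  have "cross_integral q X Y \<le> ennreal e"
    if "X \<in> borel_measurable borel" "Y \<in> borel_measurable borel"
      and X: "Lp_pow (Suc q) X \<le> ennreal B" and Y: "Lp_pow (Suc q) Y < ennreal d"
    for X Y :: "'a \<Rightarrow> real"
  proof -
    have "cross_integral q X Y \<le> ennreal (l ^ q) * Lp_pow (Suc q) X + ennreal (1 / l) * Lp_pow (Suc q) Y"
      using that(1,2) l(1) by (rule cross_integral_le_young)
    also have "\<dots> \<le> ennreal (l ^ q) * ennreal B + ennreal (1 / l) * ennreal d"
      using X Y by (intro add_mono mult_left_mono) auto
    also have "\<dots> = ennreal (l ^ q * B + e / 2)"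
      using l B e by (simp add: d_def ennreal_mult[symmetric] ennreal_plus[symmetric] del: ennreal_plus)
    also have "l ^ q * B \<le> e / 2"
      using B e by (simp add: l(2) field_simps)
    finally show ?thesis by (simp add: ennreal_leI)
  qed
  moreover have "0 < d" using e l by (simp add: d_def)
  ultimately show ?thesis using that by blast
qed

lemma cross_integral_split_le:
  fixes X Y S T :: "'a::euclidean_space \<Rightarrow> real"
  assumes [measurable]: "X \<in> borel_measurable borel" "Y \<in> borel_measurable borel"
    "S \<in> borel_measurable borel" "T \<in> borel_measurable borel"
    and S: "\<And>z. S z = 0 \<or> S z = 1" and T: "\<And>z. T z = 0 \<or> T z = 1"
  shows "cross_integral q X Y \<le> cross_integral q (\<lambda>z. X z * S z) (\<lambda>z. Y z * T z)
    + cross_integral q (\<lambda>z. X z * (1 - S z)) Y + cross_integral q X (\<lambda>z. Y z * (1 - T z))"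
proof -
  have "ennreal (\<bar>X z\<bar> * \<bar>Y z\<bar> ^ q) \<le> ennreal (\<bar>X z * S z\<bar> * \<bar>Y z * T z\<bar> ^ q)
      + ennreal (\<bar>X z * (1 - S z)\<bar> * \<bar>Y z\<bar> ^ q) + ennreal (\<bar>X z\<bar> * \<bar>Y z * (1 - T z)\<bar> ^ q)" for z
    using S[of z] T[of z] by (auto simp: add_increasing2 add_increasing)
  then have "cross_integral q X Y \<le> (\<integral>\<^sup>+z. ennreal (\<bar>X z * S z\<bar> * \<bar>Y z * T z\<bar> ^ q)
      + ennreal (\<bar>X z * (1 - S z)\<bar> * \<bar>Y z\<bar> ^ q) + ennreal (\<bar>X z\<bar> * \<bar>Y z * (1 - T z)\<bar> ^ q) \<partial>lborel)"
    unfolding cross_integral_def by (intro nn_integral_mono)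
  also have "\<dots> = cross_integral q (\<lambda>z. X z * S z) (\<lambda>z. Y z * T z)
      + cross_integral q (\<lambda>z. X z * (1 - S z)) Y + cross_integral q X (\<lambda>z. Y z * (1 - T z))"
    unfolding cross_integral_def by (simp add: nn_integral_add)
  finally show ?thesis .
qed

text \<open>Cut both profiles into a bounded, compactly supported part, for which
  orthogonality kills the cross term, and a part that is small in \<open>L\<^sup>q\<^sup>+\<^sup>1\<close>.\<close>

lemma cross_integral_rescaled_tendsto_0:
  fixes F G :: "'a::euclidean_space \<Rightarrow> real"
  assumes [measurable]: "F \<in> borel_measurable borel" "G \<in> borel_measurable borel"
    and finF: "Lp_pow (Suc q) F < \<infinity>" and finG: "Lp_pow (Suc q) G < \<infinity>"
    and lam: "\<And>n. 0 < lam n" "\<And>n. 0 < lam' n"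
    and q: "1 \<le> q" and a: "0 < a" and scaling: "a * real (Suc q) = real DIM('a)"
    and orth: "filterlim (\<lambda>n. \<bar>ln (lam n / lam' n)\<bar> + dist (c n) (c' n) / lam n) at_top sequentially"
  shows "(\<lambda>n. cross_integral q (rescale a (lam n) (c n) F) (rescale a (lam' n) (c' n) G)) \<longlonglongrightarrow> 0"
proof (rule ennreal_tendsto_0I)
  fix e :: real
  assume "0 < e"
  then have e3: "0 < e / 3" by simp
  define BF where "BF = enn2real (Lp_pow (Suc q) F)"
  define BG where "BG = enn2real (Lp_pow (Suc q) G)"
  have BF: "Lp_pow (Suc q) F = ennreal BF" "0 \<le> BF" and BG: "Lp_pow (Suc q) G = ennreal BG" "0 \<le> BG"
    using finF finG by (simp_all add: BF_def BG_def ennreal_enn2real_if)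
  obtain d1 where d1: "0 < d1" and small1: "\<And>X Y :: 'a \<Rightarrow> real. X \<in> borel_measurable borel \<Longrightarrow>
      Y \<in> borel_measurable borel \<Longrightarrow> Lp_pow (Suc q) Y \<le> ennreal BG \<Longrightarrow> Lp_pow (Suc q) X < ennreal d1 \<Longrightarrow>
      cross_integral q X Y \<le> ennreal (e / 3)"
    using cross_integral_small_if_first_small[OF BG(2) e3] by blast
  obtain d2 where d2: "0 < d2" and small2: "\<And>X Y :: 'a \<Rightarrow> real. X \<in> borel_measurable borel \<Longrightarrow>
      Y \<in> borel_measurable borel \<Longrightarrow> Lp_pow (Suc q) X \<le> ennreal BF \<Longrightarrow> Lp_pow (Suc q) Y < ennreal d2 \<Longrightarrow>
      cross_integral q X Y \<le> ennreal (e / 3)"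
    using cross_integral_small_if_second_small[OF BF(2) e3 q] by blast
  obtain s M1 R1 where [measurable]: "s \<in> borel_measurable borel" and s01: "\<And>z. s z = 0 \<or> s z = 1"
    and s_bound: "\<And>z. \<bar>F z * s z\<bar> \<le> M1" and s_supp: "\<And>z. R1 < norm z \<Longrightarrow> F z * s z = 0"
    and s_small: "Lp_pow (Suc q) (\<lambda>z. F z * (1 - s z)) < ennreal d1"
    using Lp_pow_truncation_small[OF assms(1) finF zero_less_Suc d1] by blast
  obtain t M2 R2 where [measurable]: "t \<in> borel_measurable borel" and t01: "\<And>z. t z = 0 \<or> t z = 1"
    and t_bound: "\<And>z. \<bar>G z * t z\<bar> \<le> M2" and t_supp: "\<And>z. R2 < norm z \<Longrightarrow> G z * t z = 0"
    and t_small: "Lp_pow (Suc q) (\<lambda>z. G z * (1 - t z)) < ennreal d2"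
    using Lp_pow_truncation_small[OF assms(2) finG zero_less_Suc d2] by blast
  let ?T = "\<lambda>F n. rescale a (lam n) (c n) F" and ?T' = "\<lambda>G n. rescale a (lam' n) (c' n) G"
  define M where "M = max M1 M2"
  define R where "R = max (max R1 R2) 0"
  have "\<bar>F z * s z\<bar> \<le> M" "R < norm z \<Longrightarrow> F z * s z = 0" for z
    using s_bound[of z] s_supp[of z] by (auto simp: M_def R_def)
  moreover have "\<bar>G z * t z\<bar> \<le> M" "R < norm z \<Longrightarrow> G z * t z = 0" for z
    using t_bound[of z] t_supp[of z] by (auto simp: M_def R_def)
  moreover have "0 \<le> R" by (simp add: R_def)
  ultimately have "(\<lambda>n. cross_integral q (?T (\<lambda>z. F z * s z) n) (?T' (\<lambda>z. G z * t z) n)) \<longlonglongrightarrow> 0"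
    by (rule cross_integral_rescaled_bounded_tendsto_0[OF _ _ _ _ _ lam q a scaling orth])
  then have "eventually (\<lambda>n. cross_integral q (?T (\<lambda>z. F z * s z) n) (?T' (\<lambda>z. G z * t z) n)
      < ennreal (e / 3)) sequentially"
    using e3 by (intro order_tendstoD(2)) auto
  then have bounded_part: "eventually (\<lambda>n. cross_integral q (?T (\<lambda>z. F z * s z) n) (?T' (\<lambda>z. G z * t z) n)
      \<le> ennreal (e / 3)) sequentially"
    by (rule eventually_mono) (rule less_imp_le)
  show "eventually (\<lambda>n. cross_integral q (?T F n) (?T' G n) \<le> ennreal e) sequentially"
    using bounded_part
  proof eventually_elim
    case (elim n)
    have part2: "cross_integral q (?T (\<lambda>z. F z * (1 - s z)) n) (?T' G n) \<le> ennreal (e / 3)"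
      using s_small lam scaling by (intro small1) (simp_all add: Lp_pow_rescale BG mult_ac)
    have part3: "cross_integral q (?T F n) (?T' (\<lambda>z. G z * (1 - t z)) n) \<le> ennreal (e / 3)"
      using t_small lam scaling by (intro small2) (simp_all add: Lp_pow_rescale BF mult_ac)
    have "cross_integral q (?T F n) (?T' G n) \<le> cross_integral q (?T (\<lambda>z. F z * s z) n) (?T' (\<lambda>z. G z * t z) n)
        + cross_integral q (?T (\<lambda>z. F z * (1 - s z)) n) (?T' G n) + cross_integral q (?T F n) (?T' (\<lambda>z. G z * (1 - t z)) n)"
      unfolding rescale_mult by (rule cross_integral_split_le) (simp_all add: s01 t01)
    also have "\<dots> \<le> ennreal (e / 3) + ennreal (e / 3) + ennreal (e / 3)"
      using elim part2 part3 by (intro add_mono)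
    also have "\<dots> = ennreal e"
      using e3 by (simp flip: ennreal_plus)
    finally show ?case .
  qed
qed

section \<open>Remainders of profile decompositions\<close>

lemma Lp_pow_sum_rescaled_eventually_le:
  fixes V :: "nat \<Rightarrow> 'a::euclidean_space \<Rightarrow> real" and lam :: "nat \<Rightarrow> nat \<Rightarrow> real" and c :: "nat \<Rightarrow> nat \<Rightarrow> 'a"
  assumes A: "finite A" and [measurable]: "\<And>j. j \<in> A \<Longrightarrow> V j \<in> borel_measurable borel"
    and fin: "\<And>j. j \<in> A \<Longrightarrow> Lp_pow (Suc q) (V j) < \<infinity>"
    and lam: "\<And>j n. j \<in> A \<Longrightarrow> 0 < lam j n"
    and q: "1 \<le> q" and a: "0 < a" and scaling: "a * real (Suc q) = real DIM('a)"
    and orth: "\<And>j k. j \<in> A \<Longrightarrow> k \<in> A \<Longrightarrow> j \<noteq> k \<Longrightarrow>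
       filterlim (\<lambda>n. \<bar>ln (lam j n / lam k n)\<bar> + dist (c j n) (c k n) / lam j n) at_top sequentially"
    and d: "0 < d"
  shows "eventually (\<lambda>n. Lp_pow (Suc q) (\<lambda>z. \<Sum>j\<in>A. rescale a (lam j n) (c j n) (V j) z)
    \<le> (\<Sum>j\<in>A. Lp_pow (Suc q) (V j)) + ennreal d) sequentially"
proof -
  define T where "T j n = rescale a (lam j n) (c j n) (V j)" for j n
  define X where "X n = (\<Sum>j\<in>A. \<Sum>k\<in>A - {j}. cross_integral q (T j n) (T k n))" for n
  define C where "C = ennreal (real (Suc q) * real (card A) ^ q)"
  have "X \<longlonglongrightarrow> (\<Sum>j\<in>A. \<Sum>k\<in>A - {j}. 0)"
    unfolding X_def T_def using fin lam orth
    by (intro tendsto_sum cross_integral_rescaled_tendsto_0[OF _ _ _ _ _ _ q a scaling]) auto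
  then have "(\<lambda>n. C * X n) \<longlonglongrightarrow> C * 0"
    by (intro ennreal_tendsto_cmult) (simp_all add: C_def)
  then have "eventually (\<lambda>n. C * X n < ennreal d) sequentially"
    using d by (intro order_tendstoD(2)) auto
  then show ?thesis
  proof eventually_elim
    case (elim n)
    have "Lp_pow (Suc q) (\<lambda>z. \<Sum>j\<in>A. T j n z) \<le> (\<Sum>j\<in>A. Lp_pow (Suc q) (T j n)) + C * X n"
      unfolding C_def X_def T_def by (rule Lp_pow_sum_le_cross[OF A]) simp
    also have "(\<Sum>j\<in>A. Lp_pow (Suc q) (T j n)) = (\<Sum>j\<in>A. Lp_pow (Suc q) (V j))"
      unfolding T_def using lam scaling by (intro sum.cong refl Lp_pow_rescale) auto
    also have "(\<Sum>j\<in>A. Lp_pow (Suc q) (V j)) + C * X n \<le> (\<Sum>j\<in>A. Lp_pow (Suc q) (V j)) + ennreal d"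
      using less_imp_le[OF elim] by (rule add_left_mono)
    finally show ?case unfolding T_def .
  qed
qed

lemma Lp_pow_tail_rescaled_eventually_le:
  fixes V :: "nat \<Rightarrow> 'a::euclidean_space \<Rightarrow> real" and lam :: "nat \<Rightarrow> nat \<Rightarrow> real" and c :: "nat \<Rightarrow> nat \<Rightarrow> 'a"
  assumes meas: "\<And>j. 1 \<le> j \<Longrightarrow> V j \<in> borel_measurable borel"
    and summ: "(\<Sum>j. Lp_pow (Suc q) (V (Suc j))) < \<infinity>"
    and lam: "\<And>j n. 1 \<le> j \<Longrightarrow> 0 < lam j n"
    and q: "1 \<le> q" and a: "0 < a" and scaling: "a * real (Suc q) = real DIM('a)"
    and orth: "\<And>j k. 1 \<le> j \<Longrightarrow> 1 \<le> k \<Longrightarrow> j \<noteq> k \<Longrightarrow>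
       filterlim (\<lambda>n. \<bar>ln (lam j n / lam k n)\<bar> + dist (c j n) (c k n) / lam j n) at_top sequentially"
    and e: "0 < e"
  obtains N0 where "\<And>K J. N0 \<le> K \<Longrightarrow> eventually (\<lambda>n.
    Lp_pow (Suc q) (\<lambda>z. \<Sum>j\<in>{Suc K..J}. rescale a (lam j n) (c j n) (V j) z) \<le> ennreal e) sequentially"
proof -
  obtain N0 where N0: "\<And>K J. N0 \<le> K \<Longrightarrow> (\<Sum>j\<in>{Suc K..J}. Lp_pow (Suc q) (V j)) \<le> ennreal (e / 2)"
    using ennreal_suminf_tail_le[OF summ, of "e / 2"] e by auto
  have fin: "Lp_pow (Suc q) (V j) < \<infinity>" if "1 \<le> j" for j
    using that ennreal_suminf_lessD[OF summ, of "j - 1"] by simp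
  have "eventually (\<lambda>n. Lp_pow (Suc q) (\<lambda>z. \<Sum>j\<in>{Suc K..J}. rescale a (lam j n) (c j n) (V j) z)
      \<le> ennreal e) sequentially" if "N0 \<le> K" for K J
  proof -
    have "eventually (\<lambda>n. Lp_pow (Suc q) (\<lambda>z. \<Sum>j\<in>{Suc K..J}. rescale a (lam j n) (c j n) (V j) z)
        \<le> (\<Sum>j\<in>{Suc K..J}. Lp_pow (Suc q) (V j)) + ennreal (e / 2)) sequentially"
      using meas fin lam orth e by (intro Lp_pow_sum_rescaled_eventually_le[OF _ _ _ _ q a scaling]) auto
    moreover have "(\<Sum>j\<in>{Suc K..J}. Lp_pow (Suc q) (V j)) + ennreal (e / 2) \<le> ennreal e"
      using add_right_mono[OF N0[OF that, of J], of "ennreal (e / 2)"] e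
      by (simp flip: ennreal_plus)
    ultimately show ?thesis by (auto elim: eventually_mono)
  qed
  then show ?thesis using that by blast
qed

lemma limsup_remainder_tendsto_0:
  fixes s :: "nat \<Rightarrow> nat \<Rightarrow> ennreal" and t :: "nat \<Rightarrow> nat \<Rightarrow> nat \<Rightarrow> ennreal" and C :: ennreal
  assumes split: "\<And>n K J. K \<le> J \<Longrightarrow> s n J \<le> C * (s n K + t n K J)" and C: "C \<noteq> \<infinity>"
    and tail: "\<And>e. 0 < e \<Longrightarrow> \<exists>N0. \<forall>K\<ge>N0. \<forall>J. eventually (\<lambda>n. t n K J \<le> ennreal e) sequentially"
    and Jk: "filterlim Jk at_top sequentially"
    and sub: "(\<lambda>k. limsup (\<lambda>n. s n (Jk k))) \<longlonglongrightarrow> 0"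
  shows "(\<lambda>J. limsup (\<lambda>n. s n J)) \<longlonglongrightarrow> 0"
proof (rule ennreal_tendsto_0I)
  fix e :: real
  assume "0 < e"
  obtain c where c: "C = ennreal c" "0 \<le> c" using C by (cases C) auto
  define e' where "e' = e / (c + 1) / 2"
  have "0 < c + 1" using c by simp
  then have e': "0 < e'" using \<open>0 < e\<close> by (simp add: e'_def)
  have "e' + e' = e / (c + 1)" unfolding e'_def by (rule field_sum_of_halves)
  then have "c * (e' + e') = c * e / (c + 1)" by simp
  also have "\<dots> \<le> e"
    using c \<open>0 < e\<close> \<open>0 < c + 1\<close> by (simp add: pos_divide_le_eq algebra_simps)
  finally have "c * (e' + e') \<le> e" .
  moreover have "ennreal (c * (e' + e')) = C * (ennreal e' + ennreal e')"
    using c e' by (simp add: ennreal_mult ennreal_plus[symmetric] del: ennreal_plus)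
  ultimately have Ce: "C * (ennreal e' + ennreal e') \<le> ennreal e"
    by (metis ennreal_leI)
  obtain N0 where N0: "\<And>K J. N0 \<le> K \<Longrightarrow> eventually (\<lambda>n. t n K J \<le> ennreal e') sequentially"
    using tail[OF e'] by blast
  have "eventually (\<lambda>k. limsup (\<lambda>n. s n (Jk k)) < ennreal e' \<and> N0 \<le> Jk k) sequentially"
    using order_tendstoD(2)[OF sub] e' Jk by (auto simp: filterlim_at_top intro: eventually_conj)
  then obtain K where K: "limsup (\<lambda>n. s n K) < ennreal e'" "N0 \<le> K"
    by (auto simp: eventually_sequentially)
  show "eventually (\<lambda>J. limsup (\<lambda>n. s n J) \<le> ennreal e) sequentially"
    using eventually_ge_at_top[of K]
  proof eventually_elim
    case (elim J)
    have "eventually (\<lambda>n. s n J \<le> ennreal e) sequentially"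
      using Limsup_lessD[OF K(1)] N0[OF K(2), of J]
    proof eventually_elim
      case (elim n)
      have "s n J \<le> C * (s n K + t n K J)" using \<open>K \<le> J\<close> by (rule split)
      also have "\<dots> \<le> C * (ennreal e' + ennreal e')"
        using elim by (intro mult_left_mono add_mono) auto
      finally show ?case using Ce by simp
    qed
    then show ?case by (rule Limsup_bounded)
  qed
qed

lemma Lp_pow_remainder_limsup_tendsto_0:
  fixes u :: "nat \<Rightarrow> 'a::euclidean_space \<Rightarrow> real" and V :: "nat \<Rightarrow> 'a \<Rightarrow> real"
    and lam :: "nat \<Rightarrow> nat \<Rightarrow> real" and c :: "nat \<Rightarrow> nat \<Rightarrow> 'a"
  assumes [measurable]: "\<And>n. u n \<in> borel_measurable borel"
    and meas: "\<And>j. 1 \<le> j \<Longrightarrow> V j \<in> borel_measurable borel"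
    and summ: "(\<Sum>j. Lp_pow p (V (Suc j))) < \<infinity>"
    and lam: "\<And>j n. 1 \<le> j \<Longrightarrow> 0 < lam j n"
    and p: "2 \<le> p" and a: "0 < a" and scaling: "a * real p = real DIM('a)"
    and orth: "\<And>j k. 1 \<le> j \<Longrightarrow> 1 \<le> k \<Longrightarrow> j \<noteq> k \<Longrightarrow>
       filterlim (\<lambda>n. \<bar>ln (lam j n / lam k n)\<bar> + dist (c j n) (c k n) / lam j n) at_top sequentially"
    and Jk: "filterlim Jk at_top sequentially"
    and sub: "(\<lambda>k. limsup (\<lambda>n. Lp_pow p (\<lambda>z. u n z - (\<Sum>j\<in>{1..Jk k}. rescale a (lam j n) (c j n) (V j) z))))
      \<longlonglongrightarrow> 0"
  shows "(\<lambda>J. limsup (\<lambda>n. Lp_pow p (\<lambda>z. u n z - (\<Sum>j\<in>{1..J}. rescale a (lam j n) (c j n) (V j) z))))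
    \<longlonglongrightarrow> 0"
proof (rule limsup_remainder_tendsto_0[OF _ _ _ Jk sub])
  let ?T = "\<lambda>j n. rescale a (lam j n) (c j n) (V j)"
  have T_meas: "(\<lambda>z. \<Sum>j\<in>A. ?T j n z) \<in> borel_measurable borel" if "\<And>j. j \<in> A \<Longrightarrow> 1 \<le> j" for A n
    using meas that by (intro borel_measurable_sum measurable_rescale) auto
  show "Lp_pow p (\<lambda>z. u n z - (\<Sum>j\<in>{1..J}. ?T j n z))
      \<le> ennreal (2 ^ p) * (Lp_pow p (\<lambda>z. u n z - (\<Sum>j\<in>{1..K}. ?T j n z))
        + Lp_pow p (\<lambda>z. \<Sum>j\<in>{Suc K..J}. ?T j n z))" if "K \<le> J" for n K J
  proof -
    have "{1..J} = {1..K} \<union> {Suc K..J}" "{1..K} \<inter> {Suc K..J} = {}" using that by auto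
    then have "(\<lambda>z. u n z - (\<Sum>j\<in>{1..J}. ?T j n z))
        = (\<lambda>z. (u n z - (\<Sum>j\<in>{1..K}. ?T j n z)) - (\<Sum>j\<in>{Suc K..J}. ?T j n z))"
      by (simp add: fun_eq_iff sum.union_disjoint algebra_simps)
    then show ?thesis
      by (simp only:) (rule Lp_pow_diff_le; intro borel_measurable_diff T_meas; simp)
  qed
  define q where "q = p - 1"
  have q: "p = Suc q" "1 \<le> q" using p by (simp_all add: q_def)
  show "\<exists>N0. \<forall>K\<ge>N0. \<forall>J. eventually (\<lambda>n. Lp_pow p (\<lambda>z. \<Sum>j\<in>{Suc K..J}. ?T j n z)
      \<le> ennreal e) sequentially" if "0 < e" for e
  proof -
    have "(\<Sum>j. Lp_pow (Suc q) (V (Suc j))) < \<infinity>" "a * real (Suc q) = real DIM('a)"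
      using summ scaling by (simp_all flip: q(1))
    from Lp_pow_tail_rescaled_eventually_le[where V = V and lam = lam and c = c,
        OF meas this(1) lam q(2) a this(2) orth that]
    obtain N0 where "\<And>K J. N0 \<le> K \<Longrightarrow> eventually (\<lambda>n. Lp_pow (Suc q) (\<lambda>z. \<Sum>j\<in>{Suc K..J}. ?T j n z)
        \<le> ennreal e) sequentially" by blast
    then show ?thesis unfolding q(1) by blast
  qed
qed simp

text \<open>For \<open>N \<in> {3, 4, 5}\<close> the exponent \<open>2(N+1)/(N-2)\<close> is the integer 8, 5 or 4, so the
  \<open>S(\<real>)\<close> norm can be handled with natural powers.\<close>

definition strich_pow :: "nat \<Rightarrow> nat" where
  "strich_pow N = (if N = 3 then 8 else if N = 4 then 5 else 4)"

lemma strich_exp_eq_strich_pow: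
  "N \<in> {3, 4, 5} \<Longrightarrow> strich_exp N = real (strich_pow N)"
  by (auto simp: strich_pow_def strich_exp_def)

lemma strich_pow_ge_4: "4 \<le> strich_pow N"
  by (simp add: strich_pow_def)

lemma strich_pow_scaling:
  "N \<in> {3, 4, 5} \<Longrightarrow> (real N / 2 - 1) * real (strich_pow N) = real N + 1"
  by (auto simp: strich_pow_def)

lemma Snorm_p_eq_Lp_pow:
  assumes "CARD('n) \<in> {3, 4, 5}"
  shows "Snorm_p (f :: real \<Rightarrow> real^'n \<Rightarrow> real) = Lp_pow (strich_pow CARD('n)) (\<lambda>z. f (fst z) (snd z))"
  using strich_pow_ge_4[of "CARD('n)"]
  unfolding Snorm_p_def Lp_pow_def strich_exp_eq_strich_pow[OF assms]
  by (intro nn_integral_cong) (simp add: powr_realpow')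

lemma Snorm_p_eq_Snorm_power:
  assumes "CARD('n) \<in> {3, 4, 5}"
  shows "Snorm_p (f :: real \<Rightarrow> real^'n \<Rightarrow> real) = Snorm f ^ strich_pow CARD('n)"
proof (cases "Snorm_p f = \<infinity>")
  case True
  then show ?thesis using strich_pow_ge_4[of "CARD('n)"] by (simp add: Snorm_def)
next
  case False
  define P where "P = strich_pow CARD('n)"
  define r where "r = enn2real (Snorm_p f)"
  have r: "Snorm_p f = ennreal r" "0 \<le> r" using False by (simp_all add: r_def ennreal_enn2real_if)
  have "P \<noteq> 0" using strich_pow_ge_4[of "CARD('n)"] by (simp add: P_def)
  then have "(r powr (1 / real P)) ^ P = r"
    using r(2) by (simp add: powr_powr flip: powr_realpow')
  then show ?thesis
    using False r unfolding Snorm_def strich_exp_eq_strich_pow[OF assms] P_def[symmetric]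
    by (simp add: ennreal_power)
qed

lemma limsup_Snorm_power:
  assumes "CARD('n) \<in> {3, 4, 5}"
  shows "limsup (\<lambda>n. Snorm (f n :: real \<Rightarrow> real^'n \<Rightarrow> real)) ^ strich_pow CARD('n)
    = limsup (\<lambda>n. Lp_pow (strich_pow CARD('n)) (\<lambda>z. f n (fst z) (snd z)))"
proof -
  have "0 < strich_pow CARD('n)" using strich_pow_ge_4[of "CARD('n)"] by simp
  then have "limsup (\<lambda>n. Snorm (f n) ^ strich_pow CARD('n)) = limsup (\<lambda>n. Snorm (f n)) ^ strich_pow CARD('n)"
    by (intro Limsup_compose_continuous_mono continuous_on_power_ennreal monoI power_mono_ennreal) simp_all
  then show ?thesis
    using assms by (simp add: Snorm_p_eq_Lp_pow flip: Snorm_p_eq_Snorm_power)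
qed

lemma resc_eq_rescale:
  "resc lam t0 x0 U t x = rescale (real CARD('n) / 2 - 1) lam (t0, x0) (\<lambda>z. U (fst z) (snd z)) (t, x :: real^'n)"
  by (simp add: resc_def rescale_def diff_divide_distrib algebra_simps)

lemma orth_params_imp_filterlim_dist:
  assumes lam: "\<And>n. 0 < lam n" and orth: "orth_params lam t x lam' t' x'"
  shows "filterlim (\<lambda>n. \<bar>ln (lam n / lam' n)\<bar> + dist (t n, x n) (t' n, x' n) / lam n) at_top sequentially"
  unfolding filterlim_at_top
proof
  fix Z :: real
  have bound: "\<bar>t n - t' n\<bar> / lam n + norm (x n - x' n) / lam n \<le> 2 * (dist (t n, x n) (t' n, x' n) / lam n)"
    for n
  proof -
    have "\<bar>t n - t' n\<bar> + norm (x n - x' n) \<le> 2 * dist (t n, x n) (t' n, x' n)"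
      using dist_fst_le[of "(t n, x n)" "(t' n, x' n)"] dist_snd_le[of "(t n, x n)" "(t' n, x' n)"]
      by (simp add: dist_real_def dist_norm)
    then have "(\<bar>t n - t' n\<bar> + norm (x n - x' n)) / lam n \<le> 2 * dist (t n, x n) (t' n, x' n) / lam n"
      using lam[of n] by (intro divide_right_mono) auto
    then show ?thesis by (simp add: add_divide_distrib)
  qed
  have "eventually (\<lambda>n. 2 * Z \<le> \<bar>ln (lam n / lam' n)\<bar> + \<bar>t n - t' n\<bar> / lam n + norm (x n - x' n) / lam n)
      sequentially"
    using orth by (simp add: orth_params_def filterlim_at_top)
  then show "eventually (\<lambda>n. Z \<le> \<bar>ln (lam n / lam' n)\<bar> + dist (t n, x n) (t' n, x' n) / lam n) sequentially"
  proof eventually_elim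
    case (elim n)
    then show ?case using bound[of n] abs_ge_zero[of "ln (lam n / lam' n)"] by linarith
  qed
qed

theorem claim3p9:
  fixes UL VL :: "nat \<Rightarrow> real \<Rightarrow> real^'n \<Rightarrow> real"
    and GL :: "nat \<Rightarrow> real \<Rightarrow> real^'n \<Rightarrow> real^'n"
    and lam tt :: "nat \<Rightarrow> nat \<Rightarrow> real" and xx :: "nat \<Rightarrow> nat \<Rightarrow> real^'n"
    and u0 u1 :: "nat \<Rightarrow> real^'n \<Rightarrow> real"
    and uL vL :: "nat \<Rightarrow> real \<Rightarrow> real^'n \<Rightarrow> real"
    and gL :: "nat \<Rightarrow> real \<Rightarrow> real^'n \<Rightarrow> real^'n"
    and Jk :: "nat \<Rightarrow> nat"
  assumes dim: "CARD('n) \<in> {3, 4, 5}"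
    and profiles: "\<forall>j\<ge>1. fe_wave_sol (UL j) (VL j) (GL j)"
    and lam_pos: "\<forall>j\<ge>1. \<forall>n. lam j n > 0"
    and orth: "\<forall>j\<ge>1. \<forall>k\<ge>1. j \<noteq> k \<longrightarrow>
                 orth_params (lam j) (tt j) (xx j) (lam k) (tt k) (xx k)"
    and summ: "(\<Sum>j. Snorm_p (UL (Suc j))) < \<infinity>"
    and sols: "\<forall>n. fe_wave_sol (uL n) (vL n) (gL n)"
    and data0: "\<forall>n. uL n 0 = u0 n" and data1: "\<forall>n. vL n 0 = u1 n"
    and bdd: "\<exists>C. \<forall>n. (\<integral>\<^sup>+x. ennreal (norm (gL n 0 x) ^ 2) \<partial>lborel)
                      + (\<integral>\<^sup>+x. ennreal ((u1 n x) ^ 2) \<partial>lborel) \<le> ennreal C"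
    and Jk_lim: "filterlim Jk at_top sequentially"
    and decomp_k: "(\<lambda>k. limsup (\<lambda>n. Snorm (\<lambda>t x. uL n t x -
                     (\<Sum>j\<in>{1..Jk k}. resc (lam j n) (tt j n) (xx j n) (UL j) t x))))
                   \<longlonglongrightarrow> 0"
  shows "(\<lambda>J. limsup (\<lambda>n. Snorm (\<lambda>t x. uL n t x -
            (\<Sum>j\<in>{1..J}. resc (lam j n) (tt j n) (xx j n) (UL j) t x))))
         \<longlonglongrightarrow> 0"
proof -
  define P where "P = strich_pow CARD('n)"
  let ?S = "\<lambda>J n. Snorm (\<lambda>t x. uL n t x - (\<Sum>j\<in>{1..J}. resc (lam j n) (tt j n) (xx j n) (UL j) t x))"
  let ?L = "\<lambda>J n. Lp_pow P (\<lambda>z. uL n (fst z) (snd z) - (\<Sum>j\<in>{1..J}.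
    rescale (real CARD('n) / 2 - 1) (lam j n) (tt j n, xx j n) (\<lambda>z. UL j (fst z) (snd z)) z))"
  have P: "0 < P" using strich_pow_ge_4[of "CARD('n)"] by (simp add: P_def)
  have remainder: "limsup (?S J) ^ P = limsup (?L J)" for J
    unfolding P_def limsup_Snorm_power[OF dim] by (simp add: resc_eq_rescale)
  have "(\<lambda>k. limsup (?S (Jk k)) ^ P) \<longlonglongrightarrow> 0"
    using decomp_k P by (simp add: ennreal_power_tendsto_0_iff)
  then have "(\<lambda>k. limsup (?L (Jk k))) \<longlonglongrightarrow> 0"
    by (simp only: remainder)
  moreover have "(\<Sum>j. Lp_pow P (\<lambda>z. UL (Suc j) (fst z) (snd z))) < \<infinity>"
    using summ by (simp add: P_def Snorm_p_eq_Lp_pow[OF dim])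
  moreover have "(real CARD('n) / 2 - 1) * real P = real DIM(real \<times> (real^'n))"
    using strich_pow_scaling[OF dim] by (simp add: P_def)
  moreover have "filterlim (\<lambda>n. \<bar>ln (lam j n / lam k n)\<bar> + dist (tt j n, xx j n) (tt k n, xx k n) / lam j n)
      at_top sequentially" if "1 \<le> j" "1 \<le> k" "j \<noteq> k" for j k
    using orth_params_imp_filterlim_dist lam_pos orth that by blast
  ultimately have "(\<lambda>J. limsup (?L J)) \<longlonglongrightarrow> 0"
    using profiles sols lam_pos dim strich_pow_ge_4[of "CARD('n)"]
    by (intro Lp_pow_remainder_limsup_tendsto_0[OF _ _ _ _ _ _ _ _ Jk_lim]) (auto simp: fe_wave_sol_def P_def)
  then have "(\<lambda>J. limsup (?S J) ^ P) \<longlonglongrightarrow> 0"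
    by (simp only: remainder)
  with P show ?thesis by (simp add: ennreal_power_tendsto_0_iff)
qed

end
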